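(* As $\mathbb F_3$-subspaces of the space of functions $\mathbb F_{3^{2m}}\to\mathbb F_3$, \[ \big\langle \mathrm{Tr}_{2m}(at^{3^m+1})\,\mathrm{Tr}_{2m}(bt) : a\in\mathbb F_{3^m}^*,\ b\in\mathbb F_{3^{2m}}\big\rangle_{\mathbb F_3}=\Big\{\sum_{i=0}^{m-1}\mathrm{Tr}_{2m}\big(c_it^{(3^m+1)3^i+1}\big): c_0,\dots,c_{m-1}\in\mathbb F_{3^{2m}}\Big\}. \]
   Context: $m\ge2$ is an integer; $\mathrm{Tr}_{2m}:\mathbb F_{3^{2m}}\to\mathbb F_3$ is the absolute trace $x\mapsto\sum_{i=0}^{2m-1}x^{3^i}$; $\mathbb F_{3^m}\subseteq\mathbb F_{3^{2m}}$; each expression is regarded as a function of $t\in\mathbb F_{3^{2m}}$, with pointwise products; $\langle\cdot\rangle_{\mathbb F_3}$ denotes $\mathbb F_3$-linear span. *)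

theory Defs
  imports Main
begin

text \<open>The ambient field F_{3^{2m}} is modelled as a finite field type 'a with
  CARD('a) = 3^(2m). The prime field F_3 is the image of the integers.\<close>

definition F3 :: "'a::field set" where
  "F3 = range of_int"

text \<open>The subfield F_{3^m}: fixed points of the Frobenius power x \<mapsto> x^(3^m).\<close>
definition Fsub :: "nat \<Rightarrow> 'a::field set" where
  "Fsub m = {x. x ^ (3 ^ m) = x}"

definition Tr :: "nat \<Rightarrow> 'a::field \<Rightarrow> 'a" where
  "Tr m x = (\<Sum>i<2*m. x ^ (3 ^ i))"

definition F3span :: "('b \<Rightarrow> 'a::field) set \<Rightarrow> ('b \<Rightarrow> 'a) set" where
  "F3span G = {f. \<exists>n (c::nat \<Rightarrow> 'a) (g::nat \<Rightarrow> 'b \<Rightarrow> 'a).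
      (\<forall>i<n. c i \<in> F3 \<and> g i \<in> G) \<and> f = (\<lambda>t. \<Sum>i<n. c i * g i t)}"

end

theory Submission
  imports Defs "HOL-Number_Theory.Residues" "HOL-Computational_Algebra.Polynomial"
begin

text \<open>Write \<open>q = 3 ^ m\<close> and \<open>e\<^sub>i = (q + 1) * 3 ^ i + 1\<close>. Traces lie in \<open>\<bbbF>\<^sub>3\<close>, so
  \<open>Tr x * Tr y = Tr (Tr x * y) = (\<Sum>i<2m. Tr (x ^ 3 ^ i * y))\<close>. For \<open>x = a * t ^ (q + 1)\<close>,
  which lies in \<open>\<bbbF>\<^sub>q\<close>, the summands have period \<open>m\<close> and \<open>2 = -1\<close>, so every generator is
  \<open>-(\<Sum>i<m. Tr (b * a ^ 3 ^ i * t ^ e\<^sub>i))\<close>; this gives one inclusion. Conversely, summing the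
  generators with \<open>b = c / a ^ 3 ^ j\<close> over \<open>a \<in> \<bbbF>\<^sub>q\<^sup>*\<close> isolates \<open>Tr (c * t ^ e\<^sub>j)\<close>,
  because the characters \<open>a \<mapsto> a ^ 3 ^ i\<close> (\<open>i < m\<close>) of \<open>\<bbbF>\<^sub>q\<^sup>*\<close> are pairwise distinct and
  \<open>|\<bbbF>\<^sub>q\<^sup>*| = q - 1 = -1\<close>.\<close>

lemma sum_lessThan_add:
  fixes k :: nat
  shows "(\<Sum>i<n + k. f i) = (\<Sum>i<n. f i) + (\<Sum>i<k. f (n + i))"
  by (induction k) (simp_all add: add_ac)

lemma F3span_generator: "g \<in> G \<Longrightarrow> g \<in> F3span G"
  unfolding F3span_def
  by (rule CollectI, rule exI[of _ 1], rule exI[of _ "\<lambda>_. 1"], rule exI[of _ "\<lambda>_. g"])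
     (auto simp: F3_def intro: range_eqI[of _ _ 1])

lemma F3span_zero: "(\<lambda>_. 0) \<in> F3span G"
  unfolding F3span_def by (rule CollectI, rule exI[of _ 0]) auto

lemma F3span_add:
  fixes f g :: "'b \<Rightarrow> 'a::field"
  assumes "f \<in> F3span G" "g \<in> F3span G"
  shows "(\<lambda>t. f t + g t) \<in> F3span G"
proof -
  obtain n and c :: "nat \<Rightarrow> 'a" and u where u: "\<forall>i<n. c i \<in> F3 \<and> u i \<in> G" "f = (\<lambda>t. \<Sum>i<n. c i * u i t)"
    using assms(1) unfolding F3span_def by blast
  obtain n' and c' :: "nat \<Rightarrow> 'a" and u' where u': "\<forall>i<n'. c' i \<in> F3 \<and> u' i \<in> G" "g = (\<lambda>t. \<Sum>i<n'. c' i * u' i t)"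
    using assms(2) unfolding F3span_def by blast
  define d where "d i = (if i < n then c i else c' (i - n))" for i
  define v where "v i = (if i < n then u i else u' (i - n))" for i
  have "(\<Sum>i<n + n'. d i * v i t) = f t + g t" for t
    by (simp add: sum_lessThan_add d_def v_def u u')
  moreover have "\<forall>i<n + n'. d i \<in> F3 \<and> v i \<in> G"
    using u u' by (auto simp: d_def v_def)
  ultimately show ?thesis
    unfolding F3span_def by (auto intro!: exI[of _ "n + n'"] exI[of _ d] exI[of _ v])
qed

lemma F3span_sum:
  assumes "\<And>x. x \<in> A \<Longrightarrow> f x \<in> F3span G"
  shows "(\<lambda>t. \<Sum>x\<in>A. f x t) \<in> F3span G"
  using assms
proof (induction A rule: infinite_finite_induct)
  case (insert x A)
  then show ?case
    using F3span_add[of "f x" G "\<lambda>t. \<Sum>x\<in>A. f x t"] by simp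
qed (simp_all add: F3span_zero)

lemma F3span_least:
  fixes G V :: "('b \<Rightarrow> 'a::field) set"
  assumes "G \<subseteq> V" and "(\<lambda>_. 0) \<in> V"
    and "\<And>f g. f \<in> V \<Longrightarrow> g \<in> V \<Longrightarrow> (\<lambda>t. f t + g t) \<in> V"
    and "\<And>k f. k \<in> F3 \<Longrightarrow> f \<in> V \<Longrightarrow> (\<lambda>t. k * f t) \<in> V"
  shows "F3span G \<subseteq> V"
proof
  fix f assume "f \<in> F3span G"
  then obtain n and c :: "nat \<Rightarrow> 'a" and u where u: "\<forall>i<n. c i \<in> F3 \<and> u i \<in> G" and f: "f = (\<lambda>t. \<Sum>i<n. c i * u i t)"
    unfolding F3span_def by blast
  have "(\<lambda>t. \<Sum>i<k. c i * u i t) \<in> V" if "k \<le> n" for k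
    using that
  proof (induction k)
    case (Suc k)
    then have "c k \<in> F3" "u k \<in> V"
      using u assms(1) by auto
    then have "(\<lambda>t. c k * u k t) \<in> V"
      by (rule assms(4))
    with Suc show ?case
      using assms(3) by fastforce
  qed (simp add: assms(2))
  then show "f \<in> V"
    using f by blast
qed

lemma power_card_eq_self:
  fixes x :: "'a::{field,finite}"
  shows "x ^ card (UNIV :: 'a set) = x"
proof -
  let ?U = "UNIV - {0} :: 'a set"
  obtain n where n: "card (UNIV :: 'a set) = Suc n"
    using gr0_implies_Suc[OF finite_UNIV_card_ge_0[OF finite_UNIV]] by blast
  have "x ^ n = 1" if "x \<noteq> 0"
  proof -
    have "(\<Prod>y\<in>?U. x * y) = (\<Prod>y\<in>?U. y)"
      by (rule prod.reindex_bij_witness[of _ "\<lambda>y. y / x" "\<lambda>y. x * y"]) (use that in auto)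
    moreover have "(\<Prod>y\<in>?U. x * y) = x ^ n * (\<Prod>y\<in>?U. y)"
      by (simp add: prod.distrib card_Diff_singleton n)
    ultimately show ?thesis
      by simp
  qed
  then show ?thesis
    by (cases "x = 0") (simp_all add: n)
qed

lemma CHAR_eq_of_card_eq_prime_power:
  assumes "prime p" and "card (UNIV :: 'a::{field,finite} set) = p ^ n"
  shows "CHAR('a) = p"
proof -
  have prime_CHAR: "prime CHAR('a)"
    using prime_CHAR_semidom finite_imp_CHAR_pos[where 'a='a] by simp
  moreover have "CHAR('a) dvd p ^ n"
    using CHAR_dvd_CARD[where 'a='a] assms(2) by simp
  ultimately show ?thesis
    using assms(1) prime_dvd_power primes_dvd_imp_eq by blast
qed

lemma card_roots_power_eq_le:
  assumes "n > 0"
  shows "card {x::'a::idom. x ^ n = s} \<le> n"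
proof -
  define p where "p = Polynomial.monom (1::'a) n - [:s:]"
  have "coeff p n = 1" "degree p \<le> n"
    using assms by (auto simp: p_def coeff_pCons degree_monom_le split: nat.split intro!: degree_diff_le)
  moreover have "{x. x ^ n = s} = {x. poly p x = 0}"
    by (simp add: p_def poly_monom)
  ultimately show ?thesis
    using card_poly_roots_bound[of p] by fastforce
qed

lemma card_roots_power_eq_power_le:
  assumes "k \<noteq> l"
  shows "card {x::'a::idom. x ^ k = x ^ l} \<le> max k l"
proof -
  define p where "p = Polynomial.monom (1::'a) k - Polynomial.monom 1 l"
  have "coeff p k = 1" "degree p \<le> max k l"
    using assms by (auto simp: p_def intro!: degree_diff_le order.trans[OF degree_monom_le])
  moreover have "{x. x ^ k = x ^ l} = {x. poly p x = 0}"
    by (simp add: p_def poly_monom)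
  ultimately show ?thesis
    using card_poly_roots_bound[of p] by fastforce
qed

lemma sum_multiplicative_eq_0:
  fixes h :: "'a::field \<Rightarrow> 'b::field"
  assumes "g \<in> S" "g \<noteq> 0" "h g \<noteq> 1"
    and "\<And>a. a \<in> S \<Longrightarrow> g * a \<in> S" "\<And>a. a \<in> S \<Longrightarrow> a / g \<in> S"
    and "\<And>a. a \<in> S \<Longrightarrow> h (g * a) = h g * h a"
  shows "(\<Sum>a\<in>S. h a) = 0"
proof -
  have "(\<Sum>a\<in>S. h a) = (\<Sum>a\<in>S. h (g * a))"
    using assms(2,4,5) by (intro sum.reindex_bij_witness[of _ "\<lambda>a. g * a" "\<lambda>a. a / g"]) auto
  also have "\<dots> = h g * (\<Sum>a\<in>S. h a)"
    using assms(6) by (simp add: sum_distrib_left)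
  finally have "(1 - h g) * (\<Sum>a\<in>S. h a) = 0"
    by (simp add: algebra_simps)
  with assms(3) show ?thesis
    by simp
qed

lemma Tr_zero [simp]: "Tr m 0 = 0"
  by (simp add: Tr_def zero_power)

lemma Fsub_mult: "a \<in> Fsub m \<Longrightarrow> b \<in> Fsub m \<Longrightarrow> a * b \<in> Fsub m"
  by (simp add: Fsub_def power_mult_distrib)

lemma Fsub_divide: "a \<in> Fsub m \<Longrightarrow> b \<in> Fsub m \<Longrightarrow> a / b \<in> Fsub m"
  by (simp add: Fsub_def power_divide)

lemma Fsub_power_3_power_add: "a \<in> Fsub m \<Longrightarrow> a ^ 3 ^ (m + i) = a ^ 3 ^ i"
  by (simp add: Fsub_def power_add power_mult)

definition trace_products :: "nat \<Rightarrow> ('a::field \<Rightarrow> 'a) set" where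
  "trace_products m =
     {(\<lambda>t. Tr m (a * t ^ (3 ^ m + 1)) * Tr m (b * t)) | a b. a \<in> Fsub m \<and> a \<noteq> 0}"

definition trace_monomial_sums :: "nat \<Rightarrow> ('a::field \<Rightarrow> 'a) set" where
  "trace_monomial_sums m =
     {(\<lambda>t. \<Sum>i<m. Tr m (c i * t ^ ((3 ^ m + 1) * 3 ^ i + 1))) | c. True}"

lemma zero_in_trace_monomial_sums: "(\<lambda>_. 0) \<in> trace_monomial_sums m"
  unfolding trace_monomial_sums_def by (auto intro!: exI[of _ "\<lambda>_. 0"])

context
  assumes CHAR_3: "CHAR('a::field) = 3"
begin

lemma three_eq_0: "(3::'a) = 0"
  using of_nat_CHAR[where 'a='a] CHAR_3 by simp

lemma power_3_power_add: "(x + y :: 'a) ^ 3 ^ k = x ^ 3 ^ k + y ^ 3 ^ k"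
  by (rule freshmans_dream') (simp_all add: CHAR_3)

lemma power_3_sum: "(sum f A :: 'a) ^ 3 ^ k = (\<Sum>i\<in>A. f i ^ 3 ^ k)"
  by (rule freshmans_dream_sum') (simp_all add: CHAR_3)

lemma F3_cube_eq: "(c::'a) \<in> F3 \<Longrightarrow> c ^ 3 = c"
proof -
  assume "c \<in> F3"
  then obtain z where c: "c = of_int z"
    by (auto simp: F3_def)
  have "z mod 3 \<in> {0, 1, 2}"
    by auto
  then have "(z mod 3) ^ 3 mod 3 = z mod 3"
    by auto
  then have "(3::int) dvd z ^ 3 - z"
    by (metis mod_eq_dvd_iff power_mod)
  then have "of_int (z ^ 3 - z) = (0::'a)"
    by (simp only: of_int_eq_0_iff_char_dvd CHAR_3 of_nat_numeral)
  then show ?thesis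
    by (simp add: c)
qed

lemma sum_double_period_eq_neg:
  fixes f :: "nat \<Rightarrow> 'a"
  assumes "\<And>i. f (m + i) = f i"
  shows "(\<Sum>i<2 * m. f i) = - (\<Sum>i<m. f i)"
proof -
  have "(\<Sum>i<2 * m. f i) = (\<Sum>i<m. f i) + (\<Sum>i<m. f (m + i))"
    unfolding mult_2 by (rule sum_lessThan_add)
  also have "\<dots> = 3 * (\<Sum>i<m. f i) - (\<Sum>i<m. f i)"
    by (simp only: assms) (simp add: algebra_simps)
  finally show ?thesis
    by (simp add: three_eq_0)
qed

lemma Tr_add: "Tr m (x + y :: 'a) = Tr m x + Tr m y"
  unfolding Tr_def
  by (simp add: power_3_power_add sum.distrib)

lemma Tr_sum: "Tr m (sum f A :: 'a) = (\<Sum>x\<in>A. Tr m (f x))"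
  unfolding Tr_def by (simp add: power_3_sum sum.swap[of _ A])

lemma Tr_minus: "Tr m (- x :: 'a) = - Tr m x"
  by (simp add: Tr_def power_minus_odd sum_negf)

lemma Tr_mult_cube_root:
  assumes "(c::'a) ^ 3 = c"
  shows "Tr m (c * x) = c * Tr m x"
proof -
  have "c ^ 3 ^ i = c" for i
    by (induction i) (simp_all add: power_mult assms)
  then show ?thesis
    by (simp add: Tr_def power_mult_distrib sum_distrib_left)
qed

lemma trace_monomial_sums_add:
  assumes "f \<in> trace_monomial_sums m" "g \<in> trace_monomial_sums m"
  shows "(\<lambda>t. f t + g t :: 'a) \<in> trace_monomial_sums m"
proof -
  obtain c c' where "f = (\<lambda>t. \<Sum>i<m. Tr m (c i * t ^ ((3 ^ m + 1) * 3 ^ i + 1)))"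
    "g = (\<lambda>t. \<Sum>i<m. Tr m (c' i * t ^ ((3 ^ m + 1) * 3 ^ i + 1)))"
    using assms unfolding trace_monomial_sums_def by blast
  then show ?thesis
    unfolding trace_monomial_sums_def
    by (auto simp: sum.distrib distrib_right Tr_add intro!: exI[of _ "\<lambda>i. c i + c' i"])
qed

lemma trace_monomial_sums_scale:
  assumes "k ^ 3 = k" "f \<in> trace_monomial_sums m"
  shows "(\<lambda>t. k * f t :: 'a) \<in> trace_monomial_sums m"
proof -
  obtain c where "f = (\<lambda>t. \<Sum>i<m. Tr m (c i * t ^ ((3 ^ m + 1) * 3 ^ i + 1)))"
    using assms(2) unfolding trace_monomial_sums_def by blast
  then show ?thesis
    unfolding trace_monomial_sums_def
    by (auto simp: sum_distrib_left mult.assoc Tr_mult_cube_root[OF assms(1), symmetric]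
        intro!: exI[of _ "\<lambda>i. k * c i"])
qed

end

context
  fixes m :: nat
  assumes card_eq: "card (UNIV :: 'a::{field,finite} set) = 3 ^ (2 * m)"
begin

lemma CHAR_eq_3: "CHAR('a) = 3"
  by (rule CHAR_eq_of_card_eq_prime_power[OF _ card_eq]) simp

lemma m_pos: "m > 0"
proof (rule ccontr)
  assume "\<not> m > 0"
  then have "card (UNIV :: 'a set) = 1"
    using card_eq by simp
  moreover have "card {0, 1 :: 'a} \<le> card (UNIV :: 'a set)"
    by (rule card_mono) simp_all
  ultimately show False
    by simp
qed

lemma power_3_power_m_squared: "(x::'a) ^ (3 ^ m * 3 ^ m) = x"
  using power_card_eq_self[of x] by (simp add: card_eq mult_2 power_add)

lemma norm_power_in_Fsub: "(t::'a) ^ (3 ^ m + 1) \<in> Fsub m"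
proof -
  have "(t ^ (3 ^ m + 1)) ^ 3 ^ m = t ^ (3 ^ m * 3 ^ m) * t ^ 3 ^ m"
    by (simp add: power_mult[symmetric] algebra_simps power_add)
  then show ?thesis
    by (simp add: Fsub_def power_3_power_m_squared mult.commute)
qed

lemma Tr_cube: "Tr m (x::'a) ^ 3 = Tr m x"
proof -
  have "Tr m x ^ 3 ^ 1 = (\<Sum>i<2 * m. x ^ 3 ^ Suc i)"
    unfolding Tr_def power_3_sum[OF CHAR_eq_3] by (simp add: power_mult[symmetric] mult.commute)
  also have "\<dots> = Tr m x"
    using sum.lessThan_Suc_shift[of "\<lambda>i. x ^ 3 ^ i" "2 * m"]
    by (simp add: Tr_def power_card_eq_self[of x, unfolded card_eq] add.commute)
  finally show ?thesis
    by simp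
qed

lemma Tr_mult_Tr: "Tr m (x::'a) * Tr m y = (\<Sum>i<2 * m. Tr m (x ^ 3 ^ i * y))"
proof -
  have "Tr m x * Tr m y = Tr m (Tr m x * y)"
    by (simp add: Tr_mult_cube_root[OF CHAR_eq_3] Tr_cube)
  also have "\<dots> = (\<Sum>i<2 * m. Tr m (x ^ 3 ^ i * y))"
    by (subst (2) Tr_def) (simp add: sum_distrib_right Tr_sum[OF CHAR_eq_3])
  finally show ?thesis .
qed

lemma Tr_mult_Tr_Fsub:
  assumes "(x::'a) \<in> Fsub m"
  shows "Tr m x * Tr m y = - (\<Sum>i<m. Tr m (x ^ 3 ^ i * y))"
  unfolding Tr_mult_Tr
  by (rule sum_double_period_eq_neg[OF CHAR_eq_3]) (simp add: Fsub_power_3_power_add[OF assms])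

lemma Tr_product_expansion:
  assumes "(a::'a) \<in> Fsub m"
  shows "Tr m (a * t ^ (3 ^ m + 1)) * Tr m (b * t)
       = - (\<Sum>i<m. Tr m (b * a ^ 3 ^ i * t ^ ((3 ^ m + 1) * 3 ^ i + 1)))"
proof -
  have powers: "(a * t ^ (3 ^ m + 1)) ^ 3 ^ i * (b * t) = b * a ^ 3 ^ i * t ^ ((3 ^ m + 1) * 3 ^ i + 1)"
    for i
    by (simp add: power_mult_distrib power_add mult_ac flip: power_mult)
  have "a * t ^ (3 ^ m + 1) \<in> Fsub m"
    using assms norm_power_in_Fsub by (rule Fsub_mult)
  then show ?thesis
    by (simp only: Tr_mult_Tr_Fsub powers)
qed

lemma card_Fsub_le: "card (Fsub m :: 'a set) \<le> 3 ^ m"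
proof -
  have "(3::nat) ^ m \<noteq> 1"
    using m_pos by simp
  then have "card {x::'a. x ^ 3 ^ m = x ^ 1} \<le> max (3 ^ m) 1"
    by (rule card_roots_power_eq_power_le)
  then show ?thesis
    by (simp add: Fsub_def)
qed

text \<open>Every \<open>t \<noteq> 0\<close> has its norm \<open>t ^ (3 ^ m + 1)\<close> in \<open>Fsub m - {0}\<close>, and each
  norm has at most \<open>3 ^ m + 1\<close> preimages.\<close>
lemma card_Fsub_nonzero_ge: "(3 ^ m - 1) * (3 ^ m + 1) \<le> card (Fsub m - {0} :: 'a set) * (3 ^ m + 1)"
proof -
  let ?S = "Fsub m - {0} :: 'a set" and ?fibre = "\<lambda>s. {t::'a. t ^ (3 ^ m + 1) = s}"
  obtain r where r: "(3::nat) ^ m = Suc r"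
    using gr0_implies_Suc[of "3 ^ m"] by auto
  have "(3 ^ m - 1) * (3 ^ m + 1) = card (UNIV - {0::'a})"
    by (simp add: card_Diff_singleton card_eq mult_2 power_add r)
  also have "\<dots> \<le> card (\<Union>s\<in>?S. ?fibre s)"
    using norm_power_in_Fsub by (intro card_mono) auto
  also have "\<dots> \<le> (\<Sum>s\<in>?S. card (?fibre s))"
    by (rule card_UN_le) simp
  also have "\<dots> \<le> (\<Sum>s\<in>?S. 3 ^ m + 1)"
    by (intro sum_mono card_roots_power_eq_le) simp
  finally show ?thesis
    by simp
qed

lemma card_Fsub_nonzero: "card (Fsub m - {0} :: 'a set) = 3 ^ m - 1"
proof (rule antisym)
  show "card (Fsub m - {0} :: 'a set) \<le> 3 ^ m - 1"
    using card_Fsub_le by (simp add: card_Diff_singleton Fsub_def)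
  show "3 ^ m - 1 \<le> card (Fsub m - {0} :: 'a set)"
    using card_Fsub_nonzero_ge by (rule mult_right_le_imp_le) simp
qed

lemma exists_Fsub_power_3_power_neq:
  assumes "i < m" "j < m" "i \<noteq> j"
  shows "\<exists>g \<in> Fsub m - {0}. (g::'a) ^ 3 ^ i \<noteq> g ^ 3 ^ j"
proof (rule ccontr)
  assume "\<not> ?thesis"
  then have "card (Fsub m - {0} :: 'a set) \<le> card {x::'a. x ^ 3 ^ i = x ^ 3 ^ j}"
    by (intro card_mono) auto
  also have "\<dots> \<le> max (3 ^ i) (3 ^ j)"
    using assms(3) by (intro card_roots_power_eq_power_le) simp
  also have "\<dots> < 3 ^ m - 1"
  proof -
    have "(3::nat) ^ k + 1 < 3 ^ m" if "k < m" for k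
    proof -
      have "3 * (3::nat) ^ k \<le> 3 ^ m"
        using that power_increasing[of "Suc k" m "3::nat"] by simp
      moreover have "(1::nat) \<le> 3 ^ k"
        by simp
      ultimately show ?thesis
        by linarith
    qed
    then show ?thesis
      using assms(1,2) by (simp add: max_def less_diff_conv)
  qed
  finally show False
    by (simp add: card_Fsub_nonzero)
qed

lemma sum_Fsub_power_ratio:
  assumes "i < m" "j < m"
  shows "(\<Sum>a\<in>Fsub m - {0}. (a::'a) ^ 3 ^ i / a ^ 3 ^ j) = (if i = j then -1 else 0)"
proof (cases "i = j")
  case True
  have "(\<Sum>a\<in>Fsub m - {0}. (a::'a) ^ 3 ^ i / a ^ 3 ^ j) = (\<Sum>a\<in>Fsub m - {0::'a}. 1)"
    using True by (intro sum.cong) auto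
  also have "\<dots> = of_nat (3 ^ m - 1)"
    using card_Fsub_nonzero by simp
  also have "\<dots> = 3 ^ m - 1"
    by (simp add: of_nat_diff)
  also have "\<dots> = -1"
    using three_eq_0[OF CHAR_eq_3] m_pos by simp
  finally show ?thesis
    using True by simp
next
  case False
  then obtain g :: 'a where g: "g \<in> Fsub m - {0}" "g ^ 3 ^ i \<noteq> g ^ 3 ^ j"
    using exists_Fsub_power_3_power_neq assms by blast
  have "(\<Sum>a\<in>Fsub m - {0}. a ^ 3 ^ i / a ^ 3 ^ j) = (0::'a)"
    by (rule sum_multiplicative_eq_0[where g = g and h = "\<lambda>a. a ^ 3 ^ i / a ^ 3 ^ j"])
      (use g in \<open>auto simp: Fsub_mult Fsub_divide power_mult_distrib\<close>)
  then show ?thesis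
    using False by simp
qed

lemma sum_Tr_product_inversion:
  assumes "j < m"
  shows "(\<Sum>a\<in>Fsub m - {0}. Tr m (a * t ^ (3 ^ m + 1)) * Tr m (c / a ^ 3 ^ j * t))
       = Tr m (c * (t::'a) ^ ((3 ^ m + 1) * 3 ^ j + 1))"
proof -
  let ?S = "Fsub m - {0} :: 'a set" and ?e = "\<lambda>i. (3 ^ m + 1) * 3 ^ i + 1"
  have "(\<Sum>a\<in>?S. Tr m (a * t ^ (3 ^ m + 1)) * Tr m (c / a ^ 3 ^ j * t))
      = (\<Sum>a\<in>?S. - (\<Sum>i<m. Tr m (c / a ^ 3 ^ j * a ^ 3 ^ i * t ^ ?e i)))"
    by (intro sum.cong refl Tr_product_expansion) auto
  also have "\<dots> = - (\<Sum>i<m. Tr m (c * (\<Sum>a\<in>?S. a ^ 3 ^ i / a ^ 3 ^ j) * t ^ ?e i))"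
    by (simp add: Tr_sum[OF CHAR_eq_3] sum_negf sum_distrib_left sum_distrib_right mult_ac
        sum.swap[of _ ?S])
  also have "\<dots> = - (\<Sum>i<m. if i = j then Tr m (- c * t ^ ?e j) else 0)"
    using sum_Fsub_power_ratio assms by (intro arg_cong[of _ _ uminus] sum.cong) auto
  also have "\<dots> = Tr m (c * t ^ ?e j)"
    using assms by (simp add: Tr_minus[OF CHAR_eq_3])
  finally show ?thesis .
qed

lemma trace_products_subset_trace_monomial_sums: "trace_products m \<subseteq> (trace_monomial_sums m :: ('a \<Rightarrow> 'a) set)"
proof
  fix f :: "'a \<Rightarrow> 'a"
  assume "f \<in> trace_products m"
  then obtain a b where a: "a \<in> Fsub m" and f: "f = (\<lambda>t. Tr m (a * t ^ (3 ^ m + 1)) * Tr m (b * t))"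
    unfolding trace_products_def by blast
  have "f = (\<lambda>t. \<Sum>i<m. Tr m (- (b * a ^ 3 ^ i) * t ^ ((3 ^ m + 1) * 3 ^ i + 1)))"
    unfolding f Tr_product_expansion[OF a] by (simp add: Tr_minus[OF CHAR_eq_3] sum_negf)
  then show "f \<in> trace_monomial_sums m"
    unfolding trace_monomial_sums_def by (intro CollectI exI[of _ "\<lambda>i. - (b * a ^ 3 ^ i)"]) simp
qed

lemma trace_monomial_sums_subset_F3span:
  "trace_monomial_sums m \<subseteq> F3span (trace_products m :: ('a \<Rightarrow> 'a) set)"
proof
  fix f :: "'a \<Rightarrow> 'a"
  assume "f \<in> trace_monomial_sums m"
  then obtain c where f: "f = (\<lambda>t. \<Sum>j<m. Tr m (c j * t ^ ((3 ^ m + 1) * 3 ^ j + 1)))"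
    unfolding trace_monomial_sums_def by blast
  have "f = (\<lambda>t. \<Sum>j<m. \<Sum>a\<in>Fsub m - {0}. Tr m (a * t ^ (3 ^ m + 1)) * Tr m (c j / a ^ 3 ^ j * t))"
    unfolding f by (intro ext sum.cong refl sum_Tr_product_inversion[symmetric]) simp
  also have "\<dots> \<in> F3span (trace_products m)"
    unfolding trace_products_def by (intro F3span_sum F3span_generator) blast
  finally show "f \<in> F3span (trace_products m)" .
qed

end

theorem lemma3p13:
  fixes m :: nat
  assumes "m \<ge> 2"
    and "card (UNIV :: 'a::{field,finite} set) = 3 ^ (2 * m)"
  shows "F3span {(\<lambda>t::'a. Tr m (a * t ^ (3 ^ m + 1)) * Tr m (b * t)) | a b.
                   a \<in> Fsub m \<and> a \<noteq> 0}
         = {(\<lambda>t::'a. \<Sum>i<m. Tr m (c i * t ^ ((3 ^ m + 1) * 3 ^ i + 1))) | c. True}"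
proof -
  have char_3: "CHAR('a) = 3"
    using assms(2) by (rule CHAR_eq_3)
  have "F3span (trace_products m) = (trace_monomial_sums m :: ('a \<Rightarrow> 'a) set)"
  proof (rule antisym)
    show "F3span (trace_products m) \<subseteq> (trace_monomial_sums m :: ('a \<Rightarrow> 'a) set)"
      using trace_products_subset_trace_monomial_sums[OF assms(2)] zero_in_trace_monomial_sums
        trace_monomial_sums_add[OF char_3] trace_monomial_sums_scale[OF char_3 F3_cube_eq[OF char_3]]
      by (rule F3span_least)
    show "trace_monomial_sums m \<subseteq> F3span (trace_products m :: ('a \<Rightarrow> 'a) set)"
      using assms(2) by (rule trace_monomial_sums_subset_F3span)
  qed
  then show ?thesis
    unfolding trace_products_def trace_monomial_sums_def .
qed

end
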